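(* Let $(N,v)$ be a TU game with $\Pi(v)\neq\emptyset$. Then $\{\Pi(v),\Gamma(v),\Upsilon(v),\Psi(v)\}$ is a partition of $\Omega(v)$: each of the four sets is a subset of $\Omega(v)$, and every element of $\Omega(v)$ belongs to exactly one of them.
   Context: A TU game is a pair $(N,v)$ with $N=\{1,\dots,n\}$ and $v:2^N\to\mathbb{R}$, $v(\emptyset)=0$. $\mathcal{P}(N)$ denotes the set of partitions of $N$. A core solution is a pair $(\mathbf{x},\rho)$ with $\mathbf{x}\in\mathbb{R}^n$, $\rho\in\mathcal{P}(N)$, such that $\sum_{i\in S}x_i\ge v(S)$ for all $S\subseteq N$ and $\sum_{i\in S}x_i=v(S)$ for all $S\in\rho$; $\Pi(v)$ is the set of core solutions. $K_v=\max_{\rho\in\mathcal{P}(N)}\sum_{S\in\rho}v(S)$. A feasible environment state is a pair $(\mathbf{a},\mathcal{C})$ with $\mathbf{a}\in\mathbb{R}^n$ and $\mathcal{C}$ a set of pairwise disjoint subsets of $N$ such that $a_i\ge v(\{i\})$ for all $i\in N$ and $\sum_{i\in S}a_i\le v(S)$ for all $S\in\mathcal{C}$; $\Omega(v)$ is the set of feasible environment states. Define $\Gamma(v)=\{(\mathbf{a},\mathcal{C})\in\Omega(v):\sum_{i\in N}a_i=K_v,\ \sum_{i\in S}a_i\ge v(S)\ \forall S\subseteq N,\ \mathcal{C}\notin\mathcal{P}(N)\}$, $\Upsilon(v)=\{(\mathbf{a},\mathcal{C})\in\Omega(v):\sum_{i\in N}a_i>K_v,\ \sum_{i\in S}a_i\ge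 v(S)\ \forall S\subseteq N\}$, $\Psi(v)=\{(\mathbf{a},\mathcal{C})\in\Omega(v):\exists S\subseteq N \text{ with } \sum_{i\in S}a_i<v(S)\}$. *)

theory Defs
  imports Complex_Main "HOL-Library.Disjoint_Sets"
begin

(* Players N = {1..n}; a game is v :: nat set => real (only values on subsets of N matter).
   Payoff vectors are functions nat => real (only components in N matter). *)

definition players :: "nat \<Rightarrow> nat set" where
  "players n = {1..n}"

definition partitions :: "nat \<Rightarrow> nat set set set" where
  "partitions n = {\<rho>. partition_on (players n) \<rho>}"

definition core_solutions :: "nat \<Rightarrow> (nat set \<Rightarrow> real) \<Rightarrow> ((nat \<Rightarrow> real) \<times> nat set set) set" where
  "core_solutions n v = {(x, \<rho>). \<rho> \<in> partitions n \<and>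
      (\<forall>S. S \<subseteq> players n \<longrightarrow> sum x S \<ge> v S) \<and>
      (\<forall>S\<in>\<rho>. sum x S = v S)}"

definition K_val :: "nat \<Rightarrow> (nat set \<Rightarrow> real) \<Rightarrow> real" where
  "K_val n v = Max {(\<Sum>S\<in>\<rho>. v S) | \<rho>. \<rho> \<in> partitions n}"

definition feasible_states :: "nat \<Rightarrow> (nat set \<Rightarrow> real) \<Rightarrow> ((nat \<Rightarrow> real) \<times> nat set set) set" where
  "feasible_states n v = {(a, C). C \<subseteq> Pow (players n) \<and> disjoint C \<and>
      (\<forall>i\<in>players n. a i \<ge> v {i}) \<and>
      (\<forall>S\<in>C. sum a S \<le> v S)}"

definition Gamma_set :: "nat \<Rightarrow> (nat set \<Rightarrow> real) \<Rightarrow> ((nat \<Rightarrow> real) \<times> nat set set) set" where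
  "Gamma_set n v = {(a, C) \<in> feasible_states n v.
      sum a (players n) = K_val n v \<and>
      (\<forall>S. S \<subseteq> players n \<longrightarrow> sum a S \<ge> v S) \<and> C \<notin> partitions n}"

definition Upsilon_set :: "nat \<Rightarrow> (nat set \<Rightarrow> real) \<Rightarrow> ((nat \<Rightarrow> real) \<times> nat set set) set" where
  "Upsilon_set n v = {(a, C) \<in> feasible_states n v.
      sum a (players n) > K_val n v \<and>
      (\<forall>S. S \<subseteq> players n \<longrightarrow> sum a S \<ge> v S)}"

definition Psi_set :: "nat \<Rightarrow> (nat set \<Rightarrow> real) \<Rightarrow> ((nat \<Rightarrow> real) \<times> nat set set) set" where
  "Psi_set n v = {(a, C) \<in> feasible_states n v.
      (\<exists>S. S \<subseteq> players n \<and> sum a S < v S)}"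

end

theory Submission
  imports Defs
begin

(* A feasible state (a, C) is either blocked by some coalition (Psi) or unblocked. An unblocked
   vector has total at least K_v, since over an optimal partition the block values are dominated
   by the block payoffs; a total above K_v puts the state in Upsilon. If C is a partition,
   feasibility bounds the total by K_v from above, and unblockedness forces equality on every
   block of C, so (a, C) is a core solution; otherwise a total equal to K_v puts it in Gamma. *)

definition unblocked :: "nat \<Rightarrow> (nat set \<Rightarrow> real) \<Rightarrow> (nat \<Rightarrow> real) \<Rightarrow> bool" where
  "unblocked n v a \<longleftrightarrow> (\<forall>S. S \<subseteq> players n \<longrightarrow> sum a S \<ge> v S)"

lemma not_unblocked_iff: "\<not> unblocked n v a \<longleftrightarrow> (\<exists>S. S \<subseteq> players n \<and> sum a S < v S)"
  by (auto simp: unblocked_def not_le)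

lemma sum_partition_on:
  assumes "finite A" and "partition_on A P"
  shows "sum f A = (\<Sum>p\<in>P. sum f p)"
proof -
  have "\<forall>p\<in>P. finite p"
    using assms partition_onD1 by (metis Union_upper finite_subset)
  moreover have "\<forall>p\<in>P. \<forall>q\<in>P. p \<noteq> q \<longrightarrow> p \<inter> q = {}"
    using partition_onD2[OF assms(2)] by (auto simp: disjoint_def)
  ultimately have "sum f (\<Union>P) = (\<Sum>p\<in>P. sum f p)"
    using sum.Union_disjoint by (metis comp_apply)
  then show ?thesis
    using partition_onD1[OF assms(2)] by simp
qed

lemma finite_players: "finite (players n)"
  by (simp add: players_def)

lemma finite_partitions: "finite (partitions n)"
  unfolding partitions_def by (rule finitely_many_partition_on[OF finite_players])

lemma partitions_nonempty: "partitions n \<noteq> {}"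
proof (cases "players n = {}")
  case True
  then have "{} \<in> partitions n" by (simp add: partitions_def partition_on_empty)
  then show ?thesis by blast
next
  case False
  then have "{players n} \<in> partitions n" by (simp add: partitions_def partition_on_space)
  then show ?thesis by blast
qed

lemma partition_block_subset_players: "\<rho> \<in> partitions n \<Longrightarrow> S \<in> \<rho> \<Longrightarrow> S \<subseteq> players n"
  by (auto simp: partitions_def partition_on_def)

lemma sum_partitions: "\<rho> \<in> partitions n \<Longrightarrow> sum a (players n) = (\<Sum>S\<in>\<rho>. sum a S)"
  by (simp add: partitions_def sum_partition_on[OF finite_players])

lemma K_val_attained: "\<exists>\<rho>\<in>partitions n. K_val n v = (\<Sum>S\<in>\<rho>. v S)"
proof -
  have "K_val n v \<in> {(\<Sum>S\<in>\<rho>. v S) | \<rho>. \<rho> \<in> partitions n}"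
    unfolding K_val_def using finite_partitions partitions_nonempty by (intro Max_in) auto
  then show ?thesis by blast
qed

lemma sum_blocks_le_K_val: "\<rho> \<in> partitions n \<Longrightarrow> (\<Sum>S\<in>\<rho>. v S) \<le> K_val n v"
  unfolding K_val_def using finite_partitions by (intro Max_ge) auto

lemma K_val_le_total_if_unblocked:
  assumes "unblocked n v a"
  shows "K_val n v \<le> sum a (players n)"
proof -
  obtain \<rho> where \<rho>: "\<rho> \<in> partitions n" and K: "K_val n v = (\<Sum>S\<in>\<rho>. v S)"
    using K_val_attained by blast
  have "(\<Sum>S\<in>\<rho>. v S) \<le> (\<Sum>S\<in>\<rho>. sum a S)"
    using assms partition_block_subset_players[OF \<rho>] by (intro sum_mono) (auto simp: unblocked_def)
  then show ?thesis
    using K sum_partitions[OF \<rho>, of a] by simp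
qed

lemma total_le_K_val:
  assumes "\<rho> \<in> partitions n" and "\<forall>S\<in>\<rho>. sum a S \<le> v S"
  shows "sum a (players n) \<le> K_val n v"
proof -
  have "(\<Sum>S\<in>\<rho>. sum a S) \<le> (\<Sum>S\<in>\<rho>. v S)"
    using assms(2) by (intro sum_mono) auto
  then show ?thesis
    using sum_partitions[OF assms(1), of a] sum_blocks_le_K_val[OF assms(1), of v] by simp
qed

lemma feasible_states_blocks_le: "(a, C) \<in> feasible_states n v \<Longrightarrow> S \<in> C \<Longrightarrow> sum a S \<le> v S"
  by (simp add: feasible_states_def)

lemma core_solutions_subset_feasible_states: "core_solutions n v \<subseteq> feasible_states n v"
proof
  fix \<omega> assume "\<omega> \<in> core_solutions n v"
  then obtain x \<rho> where \<omega>: "\<omega> = (x, \<rho>)" and \<rho>: "\<rho> \<in> partitions n"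
    and unbl: "unblocked n v x" and tight: "\<forall>S\<in>\<rho>. sum x S = v S"
    by (auto simp: core_solutions_def unblocked_def)
  have "\<rho> \<subseteq> Pow (players n)" "disjoint \<rho>"
    using \<rho> by (auto simp: partitions_def partition_on_def)
  moreover have "\<forall>i\<in>players n. x i \<ge> v {i}"
    using unbl by (auto simp: unblocked_def dest: spec[of _ "{_}"])
  ultimately show "\<omega> \<in> feasible_states n v"
    using \<omega> tight by (simp add: feasible_states_def)
qed

lemma core_solutions_iff:
  assumes "(a, C) \<in> feasible_states n v"
  shows "(a, C) \<in> core_solutions n v \<longleftrightarrow> unblocked n v a \<and> C \<in> partitions n"
proof -
  have "sum a S = v S" if "unblocked n v a" "C \<in> partitions n" "S \<in> C" for S
  proof (rule order_antisym)
    show "sum a S \<le> v S"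
      using feasible_states_blocks_le[OF assms \<open>S \<in> C\<close>] .
    show "v S \<le> sum a S"
      using that partition_block_subset_players by (simp add: unblocked_def)
  qed
  then show ?thesis
    by (auto simp: core_solutions_def unblocked_def)
qed

lemma total_eq_K_val_if_partition:
  assumes "(a, C) \<in> feasible_states n v" and "unblocked n v a" and "C \<in> partitions n"
  shows "sum a (players n) = K_val n v"
  using K_val_le_total_if_unblocked[OF assms(2)]
    total_le_K_val[OF assms(3), of a v] feasible_states_blocks_le[OF assms(1)] by fastforce

lemma Gamma_set_iff:
  "(a, C) \<in> feasible_states n v \<Longrightarrow>
    (a, C) \<in> Gamma_set n v \<longleftrightarrow>
    unblocked n v a \<and> sum a (players n) = K_val n v \<and> C \<notin> partitions n"
  by (auto simp: Gamma_set_def unblocked_def)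

lemma Upsilon_set_iff:
  "(a, C) \<in> feasible_states n v \<Longrightarrow>
    (a, C) \<in> Upsilon_set n v \<longleftrightarrow> unblocked n v a \<and> sum a (players n) > K_val n v"
  by (auto simp: Upsilon_set_def unblocked_def)

lemma Psi_set_iff:
  "(a, C) \<in> feasible_states n v \<Longrightarrow> (a, C) \<in> Psi_set n v \<longleftrightarrow> \<not> unblocked n v a"
  by (auto simp: Psi_set_def not_unblocked_iff)

theorem proposition7:
  fixes n :: nat and v :: "nat set \<Rightarrow> real"
  assumes "v {} = 0"
    and "core_solutions n v \<noteq> {}"
  shows "core_solutions n v \<subseteq> feasible_states n v
    \<and> Gamma_set n v \<subseteq> feasible_states n v
    \<and> Upsilon_set n v \<subseteq> feasible_states n v
    \<and> Psi_set n v \<subseteq> feasible_states n v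
    \<and> (\<forall>\<omega>\<in>feasible_states n v.
          length (filter (\<lambda>X. \<omega> \<in> X)
            [core_solutions n v, Gamma_set n v, Upsilon_set n v, Psi_set n v]) = 1)"
proof (intro conjI ballI)
  show "core_solutions n v \<subseteq> feasible_states n v"
    by (rule core_solutions_subset_feasible_states)
  show "Gamma_set n v \<subseteq> feasible_states n v" "Upsilon_set n v \<subseteq> feasible_states n v"
    "Psi_set n v \<subseteq> feasible_states n v"
    by (auto simp: Gamma_set_def Upsilon_set_def Psi_set_def)
  fix \<omega> assume "\<omega> \<in> feasible_states n v"
  then obtain a C where \<omega>: "\<omega> = (a, C)" and feas: "(a, C) \<in> feasible_states n v"
    by (metis surj_pair)
  consider "\<not> unblocked n v a"
    | "unblocked n v a" "K_val n v < sum a (players n)"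
    | "unblocked n v a" "sum a (players n) = K_val n v" "C \<in> partitions n"
    | "unblocked n v a" "sum a (players n) = K_val n v" "C \<notin> partitions n"
    using K_val_le_total_if_unblocked by fastforce
  then show "length (filter (\<lambda>X. \<omega> \<in> X)
      [core_solutions n v, Gamma_set n v, Upsilon_set n v, Psi_set n v]) = 1"
    using total_eq_K_val_if_partition[OF feas]
    by cases (auto simp: \<omega> core_solutions_iff[OF feas] Gamma_set_iff[OF feas]
        Upsilon_set_iff[OF feas] Psi_set_iff[OF feas])
qed

end
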